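(* Let $\phi$ be the characteristic function of the limiting Quicksort random variable $Y$, and for $p\ge0$ let $c_p:=\sup_{t\in\mathbb{R}}|t|^p|\phi(t)|\in[0,\infty]$. Then for every $p>1$, $$c_{p+1}\le 2^{p+1}c_p^{1+1/p}\,\frac{p}{p-1}.$$
   Context: Let $g(u):=2u\ln u+2(1-u)\ln(1-u)+1$ for $u\in(0,1)$. The limiting Quicksort random variable $Y$ is the limit in distribution of $(X_n-\mathbf{E}X_n)/n$, where $X_n$ is the number of comparisons used by randomized Quicksort on $n$ distinct numbers; equivalently, its law is the unique law with $\mathbf{E}Y=0$ and finite variance satisfying $Y\overset{d}{=}UY+(1-U)Z+g(U)$, where on the right $U,Y,Z$ are independent, $Z\overset{d}{=}Y$ and $U$ is uniform on $(0,1)$. *)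

theory Defs
  imports "HOL-Probability.Probability"
begin

definition qs_g :: "real \<Rightarrow> real" where
  "qs_g u = 2 * u * ln u + 2 * (1 - u) * ln (1 - u) + 1"

text \<open>The law of the limiting Quicksort random variable Y: the unique Borel probability
  law on the reals with mean zero and finite variance satisfying
  Y =d U Y + (1 - U) Z + g(U), with U, Y, Z independent, Z =d Y, U uniform on (0,1).\<close>
definition quicksort_law :: "real measure \<Rightarrow> bool" where
  "quicksort_law M \<longleftrightarrow>
     real_distribution M \<and>
     integrable M (\<lambda>y. y ^ 2) \<and>
     (\<integral>y. y \<partial>M) = 0 \<and>
     distr (M \<Otimes>\<^sub>M (M \<Otimes>\<^sub>M uniform_measure lborel {0<..<1::real})) borel
        (\<lambda>(y, z, u). u * y + (1 - u) * z + qs_g u) = M"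

definition qs_c :: "real measure \<Rightarrow> real \<Rightarrow> ennreal" where
  "qs_c M p = (SUP t. ennreal (\<bar>t\<bar> powr p * cmod (char M t)))"

end

theory Submission
  imports Defs
begin

(* The fixed-point equation gives |phi t| <= int_0^1 |phi (u t)| |phi ((1 - u) t)| du.
   The integrand is symmetric about u = 1/2, and for u <= 1/2 the second factor is at most
   c_p (|t|/2)^(-p).  What remains, the integral of |phi (u t)| over [0, 1/2], is bounded by
   using |phi| <= 1 up to the point where c_p |u t|^(-p) drops below 1, and the decay bound
   beyond it; this gives c_p^(1/p) p / ((p - 1) |t|). *)

lemma integral_le_of_powr_decay:
  fixes g :: "real \<Rightarrow> real" and p c X :: real
  assumes g: "g integrable_on {0..X}" and p: "p > 1" and c: "c > 0"
    and le1: "\<And>v. v \<in> {0..X} \<Longrightarrow> g v \<le> 1"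
    and decay: "\<And>v. v \<in> {0<..X} \<Longrightarrow> v powr p * g v \<le> c"
  shows "integral {0..X} g \<le> c powr (1 / p) * (p / (p - 1))"
proof -
  define a where "a = c powr (1 / p)"
  have a: "a > 0" and ap: "a powr p = c"
    using c p by (auto simp: a_def powr_powr)
  have a_le: "a \<le> a * (p / (p - 1))"
    using a p by (simp add: field_simps)
  have head: "integral {0..Y} g \<le> Y" if "0 \<le> Y" "Y \<le> X" for Y
  proof -
    have "integral {0..Y} g \<le> integral {0..Y} (\<lambda>_. 1::real)"
      using that le1 by (intro integral_le integrable_on_subinterval[OF g]) auto
    then show ?thesis using that by simp
  qed
  show ?thesis
  proof (cases "X \<le> a")
    case True
    show ?thesis
    proof (cases "0 \<le> X")
      case True
      then show ?thesis using head[of X] \<open>X \<le> a\<close> a_le unfolding a_def[symmetric] by simp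
    next
      case False
      then show ?thesis using a_le a unfolding a_def[symmetric] by simp
    qed
  next
    case False
    have tail_int: "((\<lambda>v. c * v powr (-p)) has_integral c * (a powr (1 - p) / (p - 1))) {a..}"
      using has_integral_mult_right[OF has_integral_powr_to_inf[of "-p" a]] p a
      by (simp add: minus_divide_right)
    have tail: "integral {a..X} g \<le> c * (a powr (1 - p) / (p - 1))"
    proof -
      have "integral {a..X} g \<le> integral {a..X} (\<lambda>v. c * v powr (-p))"
      proof (intro integral_le integrable_on_subinterval[OF g])
        show "(\<lambda>v. c * v powr (-p)) integrable_on {a..X}"
          using a by (intro integrable_continuous_interval continuous_intros) auto
        fix v assume v: "v \<in> {a..X}"
        then have "v > 0" using a by auto
        then show "g v \<le> c * v powr (-p)"
          using decay[of v] v a by (simp add: powr_minus field_simps mult.commute)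
      qed (use a in auto)
      also have "\<dots> \<le> c * (a powr (1 - p) / (p - 1))"
        using a c
        by (intro has_integral_subset_le[OF _ integrable_integral tail_int])
          (auto intro!: integrable_continuous_interval continuous_intros)
      finally show ?thesis .
    qed
    have "c * a powr (1 - p) = a"
      using a by (simp flip: ap powr_add)
    then have "integral {0..X} g \<le> a + a / (p - 1)"
      using Henstock_Kurzweil_Integration.integral_combine[of 0 a X g] g head[of a] tail False a by auto
    also have "\<dots> = a * (p / (p - 1))"
      using p by (simp add: field_simps)
    finally show ?thesis by (simp add: a_def)
  qed
qed

lemma integral_symmetric_eq_twice_half:
  fixes h :: "real \<Rightarrow> 'a::euclidean_space"
  assumes h: "h integrable_on {a..b}" and ab: "a \<le> b" and sym: "\<And>u. h (a + b - u) = h u"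
  shows "integral {a..b} h = 2 *\<^sub>R integral {a..(a + b) / 2} h"
proof -
  define m where "m = (a + b) / 2"
  have "integral {m..b} h = integral {m..b} (\<lambda>u. h (a + b - u))"
    by (simp add: sym)
  also have "\<dots> = integral {-b..-m} (\<lambda>x. h (x + (a + b)))"
    using Henstock_Kurzweil_Integration.integral_reflect_real[of "-m" "-b" "\<lambda>x. h (x + (a + b))"] by simp
  also have "\<dots> = integral {a..m} h"
  proof -
    have "a - (a + b) = - b" "m - (a + b) = - m" by (simp_all add: m_def field_simps)
    with integral_shift_real_ivl[of a "a + b" m h] show ?thesis by (simp only:)
  qed
  finally have "integral {m..b} h = integral {a..m} h" .
  then show ?thesis
    using Henstock_Kurzweil_Integration.integral_combine[of a m b h] h ab by (simp add: m_def scaleR_2)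
qed

lemma integral_product_powr_decay:
  fixes f :: "real \<Rightarrow> real" and p c t :: real
  assumes cont: "continuous_on UNIV f" and nonneg: "\<And>v. 0 \<le> f v" and le1: "\<And>v. f v \<le> 1"
    and decay: "\<And>v. \<bar>v\<bar> powr p * f v \<le> c" and p: "p > 1" and c: "c > 0" and t: "t \<noteq> 0"
  shows "\<bar>t\<bar> powr (p + 1) * integral {0..1} (\<lambda>u. f (u * t) * f ((1 - u) * t))
           \<le> 2 powr (p + 1) * c powr (1 + 1 / p) * (p / (p - 1))"
proof -
  define T where "T = \<bar>t\<bar>"
  have T: "T > 0" using t by (simp add: T_def)
  define D where "D = 2 powr p * c * T powr (-p)"
  have D: "D \<ge> 0" using c by (simp add: D_def)
  define h where "h u = f (u * t) * f ((1 - u) * t)" for u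
  have f_int: "(\<lambda>u. f (u * t)) integrable_on {x..y}" for x y
    by (intro integrable_continuous_interval continuous_on_compose2[OF cont] continuous_intros) auto
  have h_int: "h integrable_on {x..y}" for x y
    unfolding h_def
    by (intro integrable_continuous_interval continuous_intros continuous_on_compose2[OF cont]) auto
  have far: "f ((1 - u) * t) \<le> D" if "u \<le> 1 / 2" for u
  proof -
    have v: "T / 2 \<le> \<bar>(1 - u) * t\<bar>" using that T by (simp add: T_def abs_mult)
    have "\<bar>(1 - u) * t\<bar> powr p * f ((1 - u) * t) \<le> c" by (rule decay)
    moreover have "(T / 2) powr p * f ((1 - u) * t) \<le> \<bar>(1 - u) * t\<bar> powr p * f ((1 - u) * t)"
      using v T p nonneg by (intro mult_right_mono powr_mono2) auto
    ultimately have "(T / 2) powr p * f ((1 - u) * t) \<le> c" by linarith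
    then show ?thesis
      using T by (simp add: D_def powr_divide powr_minus field_simps)
  qed
  have near: "integral {0..1/2} (\<lambda>u. f (u * t)) \<le> (c * T powr (-p)) powr (1 / p) * (p / (p - 1))"
  proof (rule integral_le_of_powr_decay[OF f_int p])
    show "0 < c * T powr (-p)" using c T by simp
    fix u :: real assume "u \<in> {0<..1/2}"
    then have "u powr p * f (u * t) = T powr (-p) * (\<bar>u * t\<bar> powr p * f (u * t))"
      using T by (simp add: T_def abs_mult powr_mult powr_minus field_simps)
    also have "\<dots> \<le> T powr (-p) * c" by (intro mult_left_mono decay) auto
    finally show "u powr p * f (u * t) \<le> c * T powr (-p)" by (simp add: mult.commute)
  qed (use le1 in auto)
  have "(T powr (-p)) powr (1 / p) = T powr (-1)"
    using p by (simp add: powr_powr)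
  then have scale: "(c * T powr (-p)) powr (1 / p) = c powr (1 / p) / T"
    using c T by (simp add: powr_mult)
  have "integral {0..1} h = 2 * integral {0..1/2} h"
    using integral_symmetric_eq_twice_half[OF h_int, of 0 1] by (simp add: h_def mult.commute)
  also have "\<dots> \<le> 2 * integral {0..1/2} (\<lambda>u. D * f (u * t))"
  proof (intro mult_left_mono integral_le h_int integrable_on_mult_right f_int)
    fix u :: real assume "u \<in> {0..1/2}"
    then have "f (u * t) * f ((1 - u) * t) \<le> f (u * t) * D"
      using far[of u] nonneg[of "u * t"] by (intro mult_left_mono) auto
    then show "h u \<le> D * f (u * t)" by (simp add: h_def mult.commute)
  qed auto
  also have "\<dots> = 2 * D * integral {0..1/2} (\<lambda>u. f (u * t))"
    by simp
  also have "\<dots> \<le> 2 * D * (c powr (1 / p) / T * (p / (p - 1)))"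
    using near D unfolding scale by (intro mult_left_mono) auto
  finally have "T powr (p + 1) * integral {0..1} h
                  \<le> T powr (p + 1) * (2 * D * (c powr (1 / p) / T * (p / (p - 1))))"
    using T by (intro mult_left_mono) auto
  also have "\<dots> = 2 powr (p + 1) * c powr (1 + 1 / p) * (p / (p - 1))"
  proof -
    have "c powr (1 + 1 / p) = c * c powr (1 / p)" using c by (simp add: powr_add)
    then show ?thesis using T p by (simp add: D_def powr_add powr_minus field_simps)
  qed
  finally show ?thesis by (simp add: T_def h_def[abs_def])
qed

lemma powr_decay_step:
  fixes f :: "real \<Rightarrow> real" and p c t :: real
  assumes cont: "continuous_on UNIV f" and nonneg: "\<And>v. 0 \<le> f v" and le1: "\<And>v. f v \<le> 1"
    and decay: "\<And>v. \<bar>v\<bar> powr p * f v \<le> c" and p: "p > 1"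
    and fixpoint: "\<And>t. f t \<le> integral {0..1} (\<lambda>u. f (u * t) * f ((1 - u) * t))"
  shows "\<bar>t\<bar> powr (p + 1) * f t \<le> 2 powr (p + 1) * c powr (1 + 1 / p) * (p / (p - 1))"
proof -
  have "c \<ge> 0" using decay[of 0] p by simp
  then have bound_nonneg: "0 \<le> 2 powr (p + 1) * c powr (1 + 1 / p) * (p / (p - 1))"
    using p by simp
  consider "t = 0" | "c = 0" "t \<noteq> 0" | "c > 0" "t \<noteq> 0"
    using \<open>c \<ge> 0\<close> by fastforce
  then show ?thesis
  proof cases
    case 1
    then show ?thesis using bound_nonneg p by simp
  next
    case 2
    then have "f t = 0"
      using decay[of t] nonneg[of t] by (simp add: mult_le_0_iff)
    then show ?thesis using bound_nonneg by simp
  next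
    case 3
    have "\<bar>t\<bar> powr (p + 1) * f t
            \<le> \<bar>t\<bar> powr (p + 1) * integral {0..1} (\<lambda>u. f (u * t) * f ((1 - u) * t))"
      by (intro mult_left_mono fixpoint) auto
    also have "\<dots> \<le> 2 powr (p + 1) * c powr (1 + 1 / p) * (p / (p - 1))"
      using integral_product_powr_decay[OF cont nonneg le1 decay p] 3 by blast
    finally show ?thesis .
  qed
qed

lemma quicksort_law_real_distribution: "quicksort_law M \<Longrightarrow> real_distribution M"
  by (simp add: quicksort_law_def)

lemma borel_measurable_qs_g [measurable]: "qs_g \<in> borel_measurable borel"
  unfolding qs_g_def by measurable

lemma prob_space_uniform_measure_Ioo: "a < b \<Longrightarrow> prob_space (uniform_measure lborel {a<..<b::real})"
  by (intro prob_space_uniform_measure) (auto simp: emeasure_lborel_Ioo)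

lemma integral_uniform_measure_Ioo:
  fixes f :: "real \<Rightarrow> real"
  assumes ab: "a < b" and f: "continuous_on UNIV f"
  shows "(\<integral>x. f x \<partial>uniform_measure lborel {a<..<b}) = integral {a..b} f / (b - a)"
proof -
  have [measurable]: "f \<in> borel_measurable borel"
    using borel_measurable_continuous_onI[OF f] by simp
  have density: "uniform_measure lborel {a<..<b}
                   = density lborel (\<lambda>x. ennreal (indicator {a<..<b} x / (b - a)))"
  proof -
    have "indicator {a<..<b} x / ennreal (b - a) = ennreal (indicator {a<..<b} x / (b - a))" for x
      using ab by (simp add: indicator_def divide_ennreal flip: ennreal_1)
    then show ?thesis using ab unfolding uniform_measure_def by (simp add: emeasure_lborel_Ioo)
  qed
  have "set_integrable lborel {a<..<b} f"
    by (rule set_integrable_subset[OF borel_integrable_atLeastAtMost'[OF continuous_on_subset[OF f], of a b]])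
      auto
  then have "(LINT x : {a<..<b} | lborel. f x) = integral {a..b} f"
    by (simp add: set_borel_integral_eq_integral integral_open_interval_real)
  moreover have "(\<integral>x. f x \<partial>uniform_measure lborel {a<..<b}) = (LINT x : {a<..<b} | lborel. f x) / (b - a)"
    unfolding density set_lebesgue_integral_def using ab
    by (subst integral_density) (auto simp: divide_simps)
  ultimately show ?thesis by simp
qed

lemma char_affine_integral: "(\<integral>y. iexp (t * (a * y + b)) \<partial>M) = iexp (t * b) * char M (a * t)"
proof -
  have "(\<integral>y. iexp (t * (a * y + b)) \<partial>M) = (\<integral>y. iexp (t * b) * iexp (a * t * y) \<partial>M)"
    by (intro Bochner_Integration.integral_cong) (auto simp: algebra_simps simp flip: exp_add)
  then show ?thesis by (simp add: char_def)
qed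

lemma char_quicksort_law:
  assumes law: "quicksort_law M"
  defines "U \<equiv> uniform_measure lborel {0<..<1::real}"
  shows "char M t = (\<integral>u. iexp (t * qs_g u) * char M (u * t) * char M ((1 - u) * t) \<partial>U)"
proof -
  interpret real_distribution M
    using law by (rule quicksort_law_real_distribution)
  interpret U: prob_space U
    unfolding U_def by (rule prob_space_uniform_measure_Ioo) simp
  interpret MU: pair_prob_space M U ..
  interpret MMU: pair_prob_space M "M \<Otimes>\<^sub>M U" ..
  have [measurable_cong]: "sets U = sets borel"
    by (simp add: U_def)
  have "char M t = (\<integral>x. iexp (t * x) \<partial>distr (M \<Otimes>\<^sub>M (M \<Otimes>\<^sub>M U)) borel
                      (\<lambda>(y, z, u). u * y + (1 - u) * z + qs_g u))"
    using law by (simp add: quicksort_law_def char_def U_def)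
  also have "\<dots> = (\<integral>(y, z, u). iexp (t * (u * y + ((1 - u) * z + qs_g u)))
                      \<partial>(M \<Otimes>\<^sub>M (M \<Otimes>\<^sub>M U)))"
    by (subst integral_distr) (auto simp: split_beta' add.assoc)
  also have "\<dots> = (\<integral>(z, u). \<integral>y. iexp (t * (u * y + ((1 - u) * z + qs_g u))) \<partial>M
                      \<partial>(M \<Otimes>\<^sub>M U))"
    by (subst MMU.integral_snd[symmetric])
      (auto intro!: MMU.P.integrable_const_bound[where B=1]
        simp: split_beta' norm_exp_i_times simp del: of_real_mult)
  also have "\<dots> = (\<integral>(z, u). iexp (t * ((1 - u) * z + qs_g u)) * char M (u * t) \<partial>(M \<Otimes>\<^sub>M U))"
    by (simp only: char_affine_integral)
  also have "\<dots> = (\<integral>u. \<integral>z. iexp (t * ((1 - u) * z + qs_g u)) * char M (u * t) \<partial>M \<partial>U)"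
    by (subst MU.integral_snd[symmetric])
      (auto intro!: MU.P.integrable_const_bound[where B=1]
        simp: split_beta' norm_mult norm_exp_i_times cmod_char_le_1 mult_le_one simp del: of_real_mult)
  also have "\<dots> = (\<integral>u. iexp (t * qs_g u) * char M (u * t) * char M ((1 - u) * t) \<partial>U)"
    by (simp only: integral_mult_left_zero char_affine_integral) (simp only: mult_ac)
  finally show ?thesis .
qed

lemma norm_char_quicksort_law_le:
  assumes law: "quicksort_law M"
  shows "cmod (char M t) \<le> integral {0..1} (\<lambda>u. cmod (char M (u * t)) * cmod (char M ((1 - u) * t)))"
proof -
  interpret real_distribution M
    using law by (rule quicksort_law_real_distribution)
  have "continuous_on UNIV (char M)"
    by (intro continuous_at_imp_continuous_on ballI isCont_char)
  then have "continuous_on UNIV (\<lambda>u. char M (u * t))" "continuous_on UNIV (\<lambda>u. char M ((1 - u) * t))"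
    by (rule continuous_on_compose2[OF _ _ subset_UNIV], intro continuous_intros)+
  then have cont: "continuous_on UNIV (\<lambda>u. cmod (char M (u * t)) * cmod (char M ((1 - u) * t)))"
    by (intro continuous_intros)
  have "cmod (char M t) \<le> (\<integral>u. cmod (iexp (t * qs_g u) * char M (u * t) * char M ((1 - u) * t))
                                \<partial>uniform_measure lborel {0<..<1})"
    by (subst char_quicksort_law[OF law]) (rule integral_norm_bound)
  also have "\<dots> = (\<integral>u. cmod (char M (u * t)) * cmod (char M ((1 - u) * t)) \<partial>uniform_measure lborel {0<..<1})"
    by (simp add: norm_mult norm_exp_i_times del: of_real_mult)
  also have "\<dots> = integral {0..1} (\<lambda>u. cmod (char M (u * t)) * cmod (char M ((1 - u) * t)))"
    using integral_uniform_measure_Ioo[OF _ cont, of 0 1] by simp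
  finally show ?thesis .
qed

lemma qs_c_upper:
  assumes "qs_c M p \<noteq> \<infinity>"
  shows "\<bar>t\<bar> powr p * cmod (char M t) \<le> enn2real (qs_c M p)"
proof -
  have "ennreal (\<bar>t\<bar> powr p * cmod (char M t)) \<le> qs_c M p"
    unfolding qs_c_def by (rule SUP_upper) simp
  then have "enn2real (ennreal (\<bar>t\<bar> powr p * cmod (char M t))) \<le> enn2real (qs_c M p)"
    using assms by (intro enn2real_mono) (simp_all add: less_top)
  then show ?thesis by simp
qed

lemma qs_c_least: "(\<And>t. \<bar>t\<bar> powr p * cmod (char M t) \<le> R) \<Longrightarrow> qs_c M p \<le> ennreal R"
  unfolding qs_c_def by (intro SUP_least ennreal_leI)

theorem lemma2p6:
  fixes M :: "real measure" and p :: real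
  assumes "quicksort_law M" and "p > 1"
  shows "qs_c M p = \<infinity> \<or>
         qs_c M (p + 1) \<le> ennreal (2 powr (p + 1) * enn2real (qs_c M p) powr (1 + 1 / p) * (p / (p - 1)))"
proof (cases "qs_c M p = \<infinity>")
  case False
  interpret real_distribution M
    using assms(1) by (rule quicksort_law_real_distribution)
  show ?thesis
  proof (rule disjI2, rule qs_c_least, rule powr_decay_step[where f = "\<lambda>t. cmod (char M t)"])
    show "continuous_on UNIV (\<lambda>t. cmod (char M t))"
      by (intro continuous_on_norm continuous_at_imp_continuous_on ballI isCont_char)
    show "\<bar>v\<bar> powr p * cmod (char M v) \<le> enn2real (qs_c M p)" for v
      using False by (rule qs_c_upper)
    show "cmod (char M t) \<le> integral {0..1} (\<lambda>u. cmod (char M (u * t)) * cmod (char M ((1 - u) * t)))"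
      for t using assms(1) by (rule norm_char_quicksort_law_le)
  qed (use assms(2) cmod_char_le_1 in auto)
qed simp

end
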